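(* Suppose $p=2$, and let $E\subseteq\mathcal F(\Lambda,\bar K)$ be a nonzero translation-invariant subspace of finite dimension. Then there exists a nonzero function $h\in E^0$ whose period lattice $\Lambda(h)$ is characteristic, i.e. of odd index in $\Lambda$.
   Context: $K=\mathrm{GF}(2^r)$, $\bar K$ an algebraic closure; $\Lambda$ is a lattice (free abelian group of finite rank); $\mathcal F(\Lambda,\bar K)$ is the space of all functions $\Lambda\to\bar K$; translation-invariant means stable under all $f\mapsto f(\cdot+v)$, $v\in\Lambda$. $E^0$ is the span of all characters (homomorphisms $\Lambda\to\bar K^\times$) lying in $E$. $\Lambda(h)=\{v\in\Lambda:h(\cdot+v)=h\}$. A sublattice is characteristic if it is an intersection of finitely many kernels of characters $\Lambda\to\bar K^\times$. *)

theory Defs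
  imports "HOL-Algebra.Algebraic_Closure_Type" "HOL-Library.Function_Algebras"
begin

text \<open>A lattice: an abelian group that is free of finite rank n, i.e. isomorphic
  (as an abelian group) to Z^n, realised as integer sequences supported in {0..<n}.\<close>
definition free_of_rank :: "nat \<Rightarrow> ('l::ab_group_add \<Rightarrow> (nat \<Rightarrow> int)) \<Rightarrow> bool" where
  "free_of_rank n \<phi> \<longleftrightarrow>
     bij_betw \<phi> UNIV {c. \<forall>i\<ge>n. c i = 0} \<and> (\<forall>u v. \<phi> (u + v) = (\<lambda>i. \<phi> u i + \<phi> v i))"

definition is_lattice :: "'l::ab_group_add itself \<Rightarrow> bool" where
  "is_lattice _ \<longleftrightarrow> (\<exists>n (\<phi>::'l \<Rightarrow> nat \<Rightarrow> int). free_of_rank n \<phi>)"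

definition fscale :: "'k::field \<Rightarrow> ('l \<Rightarrow> 'k) \<Rightarrow> ('l \<Rightarrow> 'k)" where
  "fscale c f = (\<lambda>x. c * f x)"

definition fspan :: "('l \<Rightarrow> 'k::field) set \<Rightarrow> ('l \<Rightarrow> 'k) set" where
  "fspan S = module.span fscale S"

definition fsubspace :: "('l \<Rightarrow> 'k::field) set \<Rightarrow> bool" where
  "fsubspace S = module.subspace fscale S"

definition finite_dim :: "('l \<Rightarrow> 'k::field) set \<Rightarrow> bool" where
  "finite_dim E \<longleftrightarrow> (\<exists>B. finite B \<and> B \<subseteq> E \<and> fspan B = E)"

definition translation_invariant :: "('l::ab_group_add \<Rightarrow> 'k) set \<Rightarrow> bool" where
  "translation_invariant E \<longleftrightarrow> (\<forall>f\<in>E. \<forall>v. (\<lambda>x. f (x + v)) \<in> E)"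

definition character :: "('l::ab_group_add \<Rightarrow> 'k::field) \<Rightarrow> bool" where
  "character \<psi> \<longleftrightarrow> (\<forall>v. \<psi> v \<noteq> 0) \<and> (\<forall>u v. \<psi> (u + v) = \<psi> u * \<psi> v)"

definition char_kernel :: "('l::ab_group_add \<Rightarrow> 'k::field) \<Rightarrow> 'l set" where
  "char_kernel \<psi> = {v. \<psi> v = 1}"

definition E0 :: "('l::ab_group_add \<Rightarrow> 'k::field) set \<Rightarrow> ('l \<Rightarrow> 'k) set" where
  "E0 E = fspan {\<psi>\<in>E. character \<psi>}"

definition period_lattice :: "('l::ab_group_add \<Rightarrow> 'k) \<Rightarrow> 'l set" where
  "period_lattice h = {v. (\<lambda>x. h (x + v)) = h}"

definition characteristic_sublattice :: "'l::ab_group_add set \<Rightarrow> 'k::field itself \<Rightarrow> bool" where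
  "characteristic_sublattice M _ \<longleftrightarrow>
     (\<exists>(Chs::(('l \<Rightarrow> 'k) set)). finite Chs \<and> (\<forall>\<psi>\<in>Chs. character \<psi>) \<and> M = (\<Inter>\<psi>\<in>Chs. char_kernel \<psi>))"

end

theory Submission
  imports Defs
begin

text \<open>The translations f \<mapsto> f(\<cdot> + v) are pairwise commuting linear operators
  stabilising the finite-dimensional space E, so over the algebraically closed field they have a
  common eigenvector u \<noteq> 0 in E: some eigenspace of a non-scalar translation is a smaller invariant
  subspace, and a single operator has an eigenvector because a nonzero polynomial in it
  annihilates a vector and splits into linear factors. Then u(x + v) = \<alpha>(v) u(x), so u / u(0) is a
  character lying in E, and the period lattice of a character is its kernel.\<close>

definition poly_apply ::
    "('a::comm_ring_1 \<Rightarrow> 'b::ab_group_add \<Rightarrow> 'b) \<Rightarrow> ('b \<Rightarrow> 'b) \<Rightarrow> 'a poly \<Rightarrow> 'b \<Rightarrow> 'b" where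
  "poly_apply scale T p x = (\<Sum>i\<le>degree p. scale (coeff p i) ((T ^^ i) x))"

context vector_space
begin

lemma poly_apply_eq_sum_atMost:
  "degree (p :: 'a poly) \<le> n \<Longrightarrow> poly_apply scale T p x = (\<Sum>i\<le>n. coeff p i *s (T ^^ i) x)"
  unfolding poly_apply_def by (rule sum.mono_neutral_left) (auto simp: coeff_eq_0)

lemma poly_apply_const [simp]: "poly_apply scale T [:c :: 'a:] x = c *s x"
  by (simp add: poly_apply_def)

lemma poly_apply_add:
  "poly_apply scale T (p + q :: 'a poly) x = poly_apply scale T p x + poly_apply scale T q x"
  using poly_apply_eq_sum_atMost[of "p + q" "max (degree p) (degree q)"]
    poly_apply_eq_sum_atMost[of p "max (degree p) (degree q)"]
    poly_apply_eq_sum_atMost[of q "max (degree p) (degree q)"]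
  by (simp add: degree_add_le sum.distrib scale_left_distrib)

lemma poly_apply_smult:
  "poly_apply scale T (smult a (p :: 'a poly)) x = a *s poly_apply scale T p x"
  using poly_apply_eq_sum_atMost[of "smult a p" "degree p"]
  by (simp add: degree_smult_le poly_apply_def scale_sum_right)

lemma poly_apply_pCons_0:
  assumes "Vector_Spaces.linear scale scale T"
  shows "poly_apply scale T (pCons 0 (p :: 'a poly)) x = T (poly_apply scale T p x)"
proof -
  interpret T: Vector_Spaces.linear scale scale T by fact
  have "poly_apply scale T (pCons 0 p) x = (\<Sum>i\<le>Suc (degree p). coeff (pCons 0 p) i *s (T ^^ i) x)"
    by (rule poly_apply_eq_sum_atMost) (simp add: degree_pCons_le)
  also have "\<dots> = (\<Sum>i\<le>degree p. coeff p i *s (T ^^ Suc i) x)"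
    by (subst sum.atMost_Suc_shift) simp
  also have "\<dots> = T (poly_apply scale T p x)"
    by (simp add: poly_apply_def T.sum T.scale)
  finally show ?thesis .
qed

lemma poly_apply_in_subspace:
  assumes "subspace W" and "T ` W \<subseteq> W" and "x \<in> W"
  shows "poly_apply scale T (p :: 'a poly) x \<in> W"
proof -
  have "(T ^^ i) x \<in> W" for i
    by (induction i) (use assms in auto)
  then show ?thesis
    unfolding poly_apply_def using assms(1) by (intro subspace_sum subspace_scale) auto
qed

lemma dependent_sequence_in_finite_span:
  assumes B: "finite B" and g: "\<And>i. i \<le> card B \<Longrightarrow> g i \<in> span B"
  obtains c k where "k \<le> card B" and "c k \<noteq> 0" and "(\<Sum>i\<le>card B. c i *s g i) = 0"
proof (cases "inj_on g {..card B}")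
  case True
  have "dependent (g ` {..card B})"
  proof (rule ccontr)
    assume "independent (g ` {..card B})"
    then have "card (g ` {..card B}) \<le> card B"
      using independent_span_bound[OF B] g by auto
    with True show False by (simp add: card_image)
  qed
  then obtain u k where "k \<le> card B" "u (g k) \<noteq> 0" "(\<Sum>v\<in>g ` {..card B}. u v *s v) = 0"
    by (auto simp: dependent_finite)
  with True show thesis
    by (intro that[of k "u \<circ> g"]) (auto simp: sum.reindex)
next
  case False
  then obtain i j where ij: "i \<le> card B" "j \<le> card B" "i \<noteq> j" "g i = g j"
    by (auto simp: inj_on_def)
  show thesis
  proof (rule that[of i "\<lambda>k. of_bool (k = i) - of_bool (k = j)"])
    show "(\<Sum>k\<le>card B. (of_bool (k = i) - of_bool (k = j)) *s g k) = 0"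
      using ij
      by (simp add: scale_left_diff_distrib sum_subtractf of_bool_def
          if_distrib[of "\<lambda>a. a *s b" for b] cong: if_cong)
  qed (use ij in auto)
qed

lemma dim_psubset_in_finite_span:
  assumes U: "subspace U" and UV: "U \<subset> V" and B: "finite B" "V \<subseteq> span B"
  shows "dim U < dim V"
proof -
  obtain BU where BU: "BU \<subseteq> U" "independent BU" "U \<subseteq> span BU" "card BU = dim U"
    by (rule basis_exists)
  obtain BV where BV: "BV \<subseteq> V" "independent BV" "V \<subseteq> span BV" "card BV = dim V"
    by (rule basis_exists)
  have "BV \<subseteq> span B" using BV(1) B(2) by (rule order.trans)
  then have "finite BV" using independent_span_bound[OF B(1) BV(2)] by simp
  obtain w where w: "w \<in> V" "w \<notin> U" using UV by blast
  have "span BU \<subseteq> U" using BU(1) U by (rule span_minimal)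
  with w(2) have "w \<notin> span BU" by blast
  then have indep: "independent (insert w BU)" using BU(2) by (rule independent_insertI)
  have "insert w BU \<subseteq> span BV" using w(1) BU(1) UV BV(3) by blast
  then have "finite (insert w BU) \<and> card (insert w BU) \<le> card BV"
    by (rule independent_span_bound[OF \<open>finite BV\<close> indep])
  moreover have "w \<notin> BU" using \<open>w \<notin> span BU\<close> span_base by blast
  ultimately show ?thesis using BU(4) BV(4) by auto
qed

end

locale alg_closed_vector_space = vector_space scale
  for scale :: "'a::alg_closed_field \<Rightarrow> 'b::ab_group_add \<Rightarrow> 'b" (infixr \<open>*s\<close> 75)
begin

lemma eigenvector_if_poly_apply_eq_0:
  assumes T: "Vector_Spaces.linear scale scale T" and W: "subspace W" "T ` W \<subseteq> W"
  shows "p \<noteq> 0 \<Longrightarrow> x \<in> W \<Longrightarrow> x \<noteq> 0 \<Longrightarrow> poly_apply scale T p x = 0 \<Longrightarrow>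
    \<exists>u\<in>W. u \<noteq> 0 \<and> (\<exists>a. T u = a *s u)"
proof (induction "degree p" arbitrary: p rule: less_induct)
  case less
  show ?case
  proof (cases "degree p = 0")
    case True
    then obtain c where "p = [:c:]" by (rule degree_eq_zeroE)
    with less.prems show ?thesis by auto
  next
    case False
    then obtain a where "poly p a = 0" using alg_closed_imp_poly_has_root by blast
    then obtain q where pq: "p = [:-a, 1:] * q" by (metis dvdE poly_eq_0_iff_dvd)
    with less.prems have "q \<noteq> 0" by auto
    have deg_q: "degree q < degree p"
      unfolding pq using \<open>q \<noteq> 0\<close> by (subst degree_mult_eq) auto
    define y where "y = poly_apply scale T q x"
    have "p = smult (-a) q + pCons 0 q" using pq by simp
    then have "poly_apply scale T p x = (-a) *s y + T y"
      by (simp only: y_def poly_apply_add poly_apply_smult poly_apply_pCons_0[OF T])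
    with less.prems(4) have "T y = a *s y" by (simp add: add_eq_0_iff)
    moreover have "y \<in> W" unfolding y_def using W less.prems(2) by (rule poly_apply_in_subspace)
    ultimately show ?thesis
      using less.hyps[OF deg_q \<open>q \<noteq> 0\<close> less.prems(2,3)] y_def by blast
  qed
qed

lemma eigenvector_exists:
  assumes T: "Vector_Spaces.linear scale scale T" and W: "subspace W" "T ` W \<subseteq> W" "W \<noteq> {0}"
    and B: "finite B" "W \<subseteq> span B"
  shows "\<exists>u\<in>W. u \<noteq> 0 \<and> (\<exists>a. T u = a *s u)"
proof -
  obtain x where x: "x \<in> W" "x \<noteq> 0" using W(1,3) subspace_0 by blast
  have "(T ^^ i) x \<in> W" for i by (induction i) (use x W in auto)
  then have orbit: "(T ^^ i) x \<in> span B" for i using B(2) by blast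
  obtain c k where k: "k \<le> card B" "c k \<noteq> 0" and c: "(\<Sum>i\<le>card B. c i *s (T ^^ i) x) = 0"
    using dependent_sequence_in_finite_span[OF B(1) orbit] .
  define p where "p = (\<Sum>i\<le>card B. monom (c i) i)"
  have coeff_p: "coeff p i = (if i \<le> card B then c i else 0)" for i
    by (simp add: p_def coeff_sum)
  have "p \<noteq> 0" using k coeff_p[of k] by auto
  have "degree p \<le> card B" by (rule degree_le) (simp add: coeff_p)
  then have "poly_apply scale T p x = 0"
    using c by (simp add: poly_apply_eq_sum_atMost coeff_p)
  then show ?thesis
    using eigenvector_if_poly_apply_eq_0[OF T W(1,2) \<open>p \<noteq> 0\<close> x] by blast
qed

lemma common_eigenvector_exists:
  assumes lin: "\<And>i. Vector_Spaces.linear scale scale (T i)"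
    and comm: "\<And>i j x. T i (T j x) = T j (T i x)"
    and W: "subspace W" "\<And>i. T i ` W \<subseteq> W" "W \<noteq> {0}" "W \<subseteq> span B"
    and B: "finite B"
  shows "\<exists>u\<in>W. u \<noteq> 0 \<and> (\<forall>i. \<exists>a. T i u = a *s u)"
  using W
proof (induction "dim W" arbitrary: W rule: less_induct)
  case less
  show ?case
  proof (cases "\<forall>i. \<exists>a. \<forall>w\<in>W. T i w = a *s w")
    case True
    obtain u where "u \<in> W" "u \<noteq> 0" using less.prems(1,3) subspace_0 by blast
    with True show ?thesis by blast
  next
    case False
    then obtain i where nonscalar: "\<forall>a. \<exists>w\<in>W. T i w \<noteq> a *s w" by blast
    obtain u a where u: "u \<in> W" "u \<noteq> 0" "T i u = a *s u"
      using eigenvector_exists[OF lin less.prems(1-3) B less.prems(4)] by blast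
    define W' where "W' = {w \<in> W. T i w = a *s w}"
    interpret Ti: Vector_Spaces.linear scale scale "T i" by (rule lin)
    have "subspace W'"
      using less.prems(1) unfolding W'_def subspace_def
      by (auto simp: Ti.add Ti.scale scale_right_distrib)
    have invariant: "T j ` W' \<subseteq> W'" for j
    proof
      interpret Tj: Vector_Spaces.linear scale scale "T j" by (rule lin)
      fix y assume "y \<in> T j ` W'"
      then obtain w where w: "w \<in> W" "T i w = a *s w" "y = T j w" by (auto simp: W'_def)
      have "T i y = a *s y" using w comm[of i j w] by (simp add: Tj.scale)
      moreover have "y \<in> W" using less.prems(2) w by blast
      ultimately show "y \<in> W'" by (simp add: W'_def)
    qed
    have "W' \<subset> W" using nonscalar by (auto simp: W'_def)
    then have "dim W' < dim W"
      using \<open>subspace W'\<close> B less.prems(4) by (intro dim_psubset_in_finite_span)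
    moreover have "W' \<noteq> {0}" using u by (auto simp: W'_def)
    moreover have "W' \<subseteq> span B" using \<open>W' \<subset> W\<close> less.prems(4) by blast
    ultimately have "\<exists>w\<in>W'. w \<noteq> 0 \<and> (\<forall>i. \<exists>a. T i w = a *s w)"
      using less.hyps[OF _ \<open>subspace W'\<close> invariant] by blast
    then show ?thesis by (auto simp: W'_def)
  qed
qed

end

interpretation fvs: alg_closed_vector_space "fscale :: 'k::alg_closed_field \<Rightarrow> ('l \<Rightarrow> 'k) \<Rightarrow> ('l \<Rightarrow> 'k)"
  by unfold_locales (auto simp: fscale_def fun_eq_iff algebra_simps)

lemma linear_translation:
  "Vector_Spaces.linear fscale fscale (\<lambda>(f :: 'l::ab_group_add \<Rightarrow> 'k::field) x. f (x + v))"
  by unfold_locales (auto simp: fscale_def algebra_simps)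

lemma character_if_translation_eigenvector:
  fixes u :: "'l::ab_group_add \<Rightarrow> 'k::field"
  assumes "u \<noteq> 0" and eigen: "\<And>v. \<exists>a. (\<lambda>x. u (x + v)) = fscale a u"
  shows "character (fscale (1 / u 0) u)"
proof -
  obtain \<alpha> where \<alpha>: "\<And>x v. u (x + v) = \<alpha> v * u x"
    using eigen by (metis fscale_def)
  have "u 0 \<noteq> 0"
  proof
    assume "u 0 = 0"
    then have "u v = 0" for v using \<alpha>[of 0 v] by simp
    with \<open>u \<noteq> 0\<close> show False by auto
  qed
  define \<psi> where "\<psi> = fscale (1 / u 0) u"
  have \<psi>_0: "\<psi> 0 = 1" using \<open>u 0 \<noteq> 0\<close> by (simp add: \<psi>_def fscale_def)
  have \<psi>_add: "\<psi> (x + v) = \<psi> x * \<psi> v" for x v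
    using \<alpha>[of x v] \<alpha>[of 0 v] \<open>u 0 \<noteq> 0\<close> by (simp add: \<psi>_def fscale_def)
  have "\<psi> v \<noteq> 0" for v
    using \<psi>_add[of v "- v"] \<psi>_0 by auto
  with \<psi>_add show ?thesis unfolding \<psi>_def[symmetric] character_def by blast
qed

lemma period_lattice_character:
  assumes "character \<psi>"
  shows "period_lattice \<psi> = char_kernel \<psi>"
proof -
  have "\<psi> 0 * \<psi> 0 = \<psi> 0" and "\<psi> 0 \<noteq> 0"
    using assms unfolding character_def by (metis add_0)+
  then have "\<psi> 0 = 1" by simp
  then show ?thesis
    using assms unfolding period_lattice_def char_kernel_def character_def
    by (auto simp: fun_eq_iff)
qed

theorem lemma5p13:
  fixes E :: "('l::ab_group_add \<Rightarrow> 'f::{field,finite} alg_closure) set"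
    and r :: nat
  assumes "r \<ge> 1" and "card (UNIV :: 'f set) = 2 ^ r"
    and "is_lattice TYPE('l)"
    and "fsubspace E" and "finite_dim E" and "translation_invariant E"
    and "E \<noteq> {0}"
  shows "\<exists>h\<in>E0 E. h \<noteq> 0 \<and>
           characteristic_sublattice (period_lattice h) TYPE('f alg_closure)"
proof -
  have E: "fvs.subspace E" using assms(4) by (simp add: fsubspace_def)
  obtain B where B: "finite B" "E \<subseteq> fvs.span B"
    using assms(5) by (auto simp: finite_dim_def fspan_def)
  have invariant: "(\<lambda>f x. f (x + v)) ` E \<subseteq> E" for v
    using assms(6) by (auto simp: translation_invariant_def)
  have "\<exists>u\<in>E. u \<noteq> 0 \<and> (\<forall>v. \<exists>a. (\<lambda>x. u (x + v)) = fscale a u)"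
    by (rule fvs.common_eigenvector_exists[where T = "\<lambda>v f x. f (x + v)",
          OF linear_translation _ E invariant assms(7) B(2) B(1)]) (simp add: add_ac)
  then obtain u where u: "u \<in> E" "u \<noteq> 0" "\<And>v. \<exists>a. (\<lambda>x. u (x + v)) = fscale a u"
    by blast
  define \<psi> where "\<psi> = fscale (1 / u 0) u"
  have \<psi>: "character \<psi>"
    unfolding \<psi>_def using u(2,3) by (rule character_if_translation_eigenvector)
  have "\<psi> \<in> E" unfolding \<psi>_def by (rule fvs.subspace_scale[OF E u(1)])
  with \<psi> have "\<psi> \<in> E0 E" unfolding E0_def fspan_def by (intro fvs.span_base) simp
  moreover have "\<psi> \<noteq> 0" using \<psi> by (auto simp: character_def)
  moreover have "characteristic_sublattice (period_lattice \<psi>) TYPE('f alg_closure)"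
    unfolding period_lattice_character[OF \<psi>] characteristic_sublattice_def
    using \<psi> by (intro exI[of _ "{\<psi>}"]) auto
  ultimately show ?thesis by blast
qed

end
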